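(* If $s,t\in\Sigma^n$ and there exists a symbol that appears in both $s$ and $t$, then $D(P(H(s)-H(t)))\le n-1$.
   Context: Let $k\ge 1$ be an integer, $\Sigma=\{0,1,\dots,k-1\}$, $n\ge 1$. The histogram $H(s):\Sigma\to\mathbb{Z}$ of a string $s$ gives the number of occurrences of each symbol in $s$. For $H:\Sigma\to\mathbb{Z}$, the partial sum is $P(H)(i)=\sum_{j=0}^{i}H(j)$ and the difference is $D(H)=\max_{i,j\in\Sigma}(H(i)-H(j))$. *)

theory Defs
  imports Main
begin

text \<open>Strings over the alphabet Sigma = {0,...,k-1} are lists of naturals with entries below k.\<close>

definition hist :: "nat list \<Rightarrow> nat \<Rightarrow> int" where
  "hist s a = int (count_list s a)"

definition psum :: "(nat \<Rightarrow> int) \<Rightarrow> nat \<Rightarrow> int" where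
  "psum H i = (\<Sum>j = 0..i. H j)"

definition Dif :: "nat \<Rightarrow> (nat \<Rightarrow> int) \<Rightarrow> int" where
  "Dif k H = Max {H i - H j | i j. i < k \<and> j < k}"

end

theory Submission
  imports Defs
begin

text \<open>The partial sum at \<open>i\<close> of \<open>H(s) - H(t)\<close> is the number of letters \<open>\<le> i\<close> in \<open>s\<close> minus that
  in \<open>t\<close>, so a difference of two partial sums counts letters of a window \<open>(j, i]\<close> in one string
  minus those in the other. If the common symbol lies in the window, the subtracted string
  contributes at least one letter; otherwise the other string contributes at most \<open>n - 1\<close>.\<close>

lemma Dif_le_iff:
  assumes "0 < k"
  shows "Dif k H \<le> b \<longleftrightarrow> (\<forall>i<k. \<forall>j<k. H i - H j \<le> b)"
proof -
  let ?D = "{H i - H j | i j. i < k \<and> j < k}"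
  have "?D = (\<lambda>(i, j). H i - H j) ` ({..<k} \<times> {..<k})"
    by auto
  then have "finite ?D"
    by simp
  moreover have "?D \<noteq> {}"
    using assms by blast
  ultimately show ?thesis
    unfolding Dif_def by (auto simp: Max_le_iff)
qed

lemma sum_count_list_eq_length_filter:
  assumes "finite A"
  shows "(\<Sum>x\<in>A. count_list xs x) = length (filter (\<lambda>x. x \<in> A) xs)"
proof (induction xs)
  case (Cons y xs)
  have "(\<Sum>x\<in>A. count_list (y # xs) x) = (\<Sum>x\<in>A. count_list xs x + (if y = x then 1 else 0))"
    by (intro sum.cong) auto
  also have "\<dots> = (\<Sum>x\<in>A. count_list xs x) + (if y \<in> A then 1 else 0)"
    using assms by (simp add: sum.distrib sum.delta)
  finally show ?case
    using Cons.IH by simp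
qed simp

lemma psum_hist_diff:
  "psum (\<lambda>a. hist s a - hist t a) i
     = int (length (filter (\<lambda>x. x \<le> i) s)) - int (length (filter (\<lambda>x. x \<le> i) t))"
proof -
  have "psum (hist xs) i = int (length (filter (\<lambda>x. x \<le> i) xs))" for xs
    unfolding psum_def hist_def
    by (simp flip: of_nat_sum add: sum_count_list_eq_length_filter atLeast0AtMost atMost_iff)
  then show ?thesis
    unfolding psum_def by (simp add: sum_subtractf)
qed

lemma length_filter_le_split:
  fixes xs :: "nat list"
  assumes "j \<le> i"
  shows "length (filter (\<lambda>x. x \<le> i) xs)
           = length (filter (\<lambda>x. x \<le> j) xs) + length (filter (\<lambda>x. j < x \<and> x \<le> i) xs)"
  using assms by (induction xs) auto

lemma length_filter_diff_le:
  assumes "a \<in> set xs" and "a \<in> set ys"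
  shows "int (length (filter P xs)) - int (length (filter P ys)) \<le> int (length xs) - 1"
proof (cases "P a")
  case True
  with \<open>a \<in> set ys\<close> have "filter P ys \<noteq> []"
    by (auto simp: filter_empty_conv)
  then have "0 < length (filter P ys)"
    by simp
  then show ?thesis
    using length_filter_le[of P xs] by linarith
next
  case False
  with \<open>a \<in> set xs\<close> have "length (filter P xs) < length xs"
    by (intro length_filter_less) auto
  then show ?thesis
    by linarith
qed

lemma psum_hist_diff_le:
  assumes "length s = n" and "length t = n" and "a \<in> set s" and "a \<in> set t"
  shows "psum (\<lambda>a. hist s a - hist t a) i - psum (\<lambda>a. hist s a - hist t a) j \<le> int n - 1"
proof (cases "j \<le> i")
  case True
  then show ?thesis
    unfolding psum_hist_diff
    using length_filter_le_split[OF True, of s] length_filter_le_split[OF True, of t]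
      length_filter_diff_le[OF assms(3,4), of "\<lambda>x. j < x \<and> x \<le> i"] assms(1)
    by linarith
next
  case False
  then have "i \<le> j"
    by simp
  then show ?thesis
    unfolding psum_hist_diff
    using length_filter_le_split[OF \<open>i \<le> j\<close>, of s] length_filter_le_split[OF \<open>i \<le> j\<close>, of t]
      length_filter_diff_le[OF assms(4,3), of "\<lambda>x. i < x \<and> x \<le> j"] assms(2)
    by linarith
qed

theorem lemma6:
  fixes k n :: nat and s t :: "nat list"
  assumes "k \<ge> 1" and "n \<ge> 1"
    and "length s = n" and "length t = n"
    and "set s \<subseteq> {..<k}" and "set t \<subseteq> {..<k}"
    and "\<exists>a. a \<in> set s \<and> a \<in> set t"
  shows "Dif k (psum (\<lambda>i. hist s i - hist t i)) \<le> int n - 1"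
proof -
  obtain a where "a \<in> set s" and "a \<in> set t"
    using assms(7) by blast
  moreover have "0 < k"
    using assms(1) by simp
  ultimately show ?thesis
    unfolding Dif_le_iff[OF \<open>0 < k\<close>] using assms(3,4) psum_hist_diff_le by blast
qed

end
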